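(* For any plane graph $G$, $\pi'_{fl}(G)\le 10$.
   Context: A plane graph is a planar graph with a fixed embedding in the plane. A facial edge-path is a path whose edges are consecutive edges on the boundary walk of some face. An edge path $e_1,\dots,e_{2j}$ is a repetition if $c(e_i)=c(e_{i+j})$ for all $1\le i\le j$. An edge-coloring is facially non-repetitive if no facial edge-path is a repetition. $\pi'_{fl}(G)$, the facial Thue choice index, is the minimum $k$ such that for every assignment of lists of size at least $k$ to the edges, $G$ has a facially non-repetitive edge-coloring with each edge colored from its list. *)

theory Defs
  imports "HOL-Combinatorics.Permutations"
begin

text \<open>Plane graphs are represented combinatorially as planar maps (rotation systems):
  a finite set D of darts (half-edges), a fixed-point-free involution alpha on D
  (the two darts of an edge) and a permutation sigma on D (the cyclic order of darts
  around each vertex, given by the embedding).  Vertices are sigma-orbits, edges are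
  alpha-orbits, faces (boundary walks) are orbits of phi = sigma o alpha.  The map is
  plane iff every connected component satisfies Euler's formula V - E + F = 2.\<close>

definition orb :: "('d \<Rightarrow> 'd) \<Rightarrow> 'd \<Rightarrow> 'd set" where
  "orb f d = {(f ^^ n) d | n. True}"

definition orbits :: "('d \<Rightarrow> 'd) \<Rightarrow> 'd set \<Rightarrow> 'd set set" where
  "orbits f C = orb f ` C"

definition comp_rel :: "'d set \<Rightarrow> ('d \<Rightarrow> 'd) \<Rightarrow> ('d \<Rightarrow> 'd) \<Rightarrow> ('d \<times> 'd) set" where
  "comp_rel D alpha sigma = {(d, alpha d) | d. d \<in> D} \<union> {(d, sigma d) | d. d \<in> D}"

definition components :: "'d set \<Rightarrow> ('d \<Rightarrow> 'd) \<Rightarrow> ('d \<Rightarrow> 'd) \<Rightarrow> 'd set set" where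
  "components D alpha sigma = (\<lambda>d. {d'. (d, d') \<in> (comp_rel D alpha sigma)\<^sup>*}) ` D"

definition face_succ :: "('d \<Rightarrow> 'd) \<Rightarrow> ('d \<Rightarrow> 'd) \<Rightarrow> 'd \<Rightarrow> 'd" where
  "face_succ alpha sigma = sigma \<circ> alpha"

definition tail_v :: "('d \<Rightarrow> 'd) \<Rightarrow> 'd \<Rightarrow> 'd set" where
  "tail_v sigma d = orb sigma d"

definition head_v :: "('d \<Rightarrow> 'd) \<Rightarrow> ('d \<Rightarrow> 'd) \<Rightarrow> 'd \<Rightarrow> 'd set" where
  "head_v alpha sigma d = orb sigma (alpha d)"

definition edge_of :: "('d \<Rightarrow> 'd) \<Rightarrow> 'd \<Rightarrow> 'd set" where
  "edge_of alpha d = {d, alpha d}"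

definition plane_map :: "'d set \<Rightarrow> ('d \<Rightarrow> 'd) \<Rightarrow> ('d \<Rightarrow> 'd) \<Rightarrow> bool" where
  "plane_map D alpha sigma \<longleftrightarrow>
     finite D \<and> alpha permutes D \<and> sigma permutes D \<and>
     (\<forall>d\<in>D. alpha d \<noteq> d \<and> alpha (alpha d) = d) \<and>
     (\<forall>C\<in>components D alpha sigma.
        int (card (orbits sigma C)) - int (card (orbits alpha C))
          + int (card (orbits (face_succ alpha sigma) C)) = 2)"

definition simple_map :: "'d set \<Rightarrow> ('d \<Rightarrow> 'd) \<Rightarrow> ('d \<Rightarrow> 'd) \<Rightarrow> bool" where
  "simple_map D alpha sigma \<longleftrightarrow>
     (\<forall>d\<in>D. tail_v sigma d \<noteq> head_v alpha sigma d) \<and>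
     (\<forall>d\<in>D. \<forall>d'\<in>D. tail_v sigma d = tail_v sigma d' \<and> head_v alpha sigma d = head_v alpha sigma d'
          \<longrightarrow> d = d')"

definition plane_graph :: "'d set \<Rightarrow> ('d \<Rightarrow> 'd) \<Rightarrow> ('d \<Rightarrow> 'd) \<Rightarrow> bool" where
  "plane_graph D alpha sigma \<longleftrightarrow> plane_map D alpha sigma \<and> simple_map D alpha sigma"

definition facial_path :: "'d set \<Rightarrow> ('d \<Rightarrow> 'd) \<Rightarrow> ('d \<Rightarrow> 'd) \<Rightarrow> 'd list \<Rightarrow> bool" where
  "facial_path D alpha sigma ds \<longleftrightarrow>
     ds \<noteq> [] \<and> set ds \<subseteq> D \<and>
     (\<forall>i. Suc i < length ds \<longrightarrow> ds ! Suc i = face_succ alpha sigma (ds ! i)) \<and>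
     distinct (map (tail_v sigma) ds @ [head_v alpha sigma (last ds)])"

definition repetition :: "'c list \<Rightarrow> bool" where
  "repetition xs \<longleftrightarrow> (\<exists>j>0. length xs = 2 * j \<and> (\<forall>i<j. xs ! i = xs ! (i + j)))"

definition facially_nonrepetitive ::
  "'d set \<Rightarrow> ('d \<Rightarrow> 'd) \<Rightarrow> ('d \<Rightarrow> 'd) \<Rightarrow> ('d set \<Rightarrow> 'c) \<Rightarrow> bool" where
  "facially_nonrepetitive D alpha sigma c \<longleftrightarrow>
     (\<forall>ds. facial_path D alpha sigma ds \<longrightarrow> \<not> repetition (map (\<lambda>d. c (edge_of alpha d)) ds))"

end

theory Submission
  imports Defs Complex_Main
begin

text \<open>We may shrink all lists to exactly 10 colours.  For a set S of edges let ngood S count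
  the colourings of S from the lists without a repetition on any facial path inside S; we show
  ngood (S - {e}) \<le> ngood S for every e \<in> S, so that ngood S > 0 by induction on S.

  Each of the 10 extensions to e of a good colouring of S - {e} is either good on S or repeats
  along an even facial path P through e of length 2j; in the latter case it is determined by its
  restriction to S minus the half of P containing e.  That half can be removed edge by edge so
  that each removed edge after e dangles (it is an end of every facial path through its dart),
  and for dangling edges the stronger bound 3 ngood (S - {e}) \<le> ngood S holds.  Hence P
  accounts for at most 3^(1-j) ngood (S - {e}) extensions.  As at most 4j paths of length 2j
  pass through e, and at most 2j + 1 if e dangles, summing the geometric weights yields
  10 x \<le> ngood S + 9 x, resp. 10 x \<le> ngood S + 6 x, for x = ngood (S - {e}).  Both bounds
  are proved by a simultaneous induction on the size of S.\<close>

lemma orb_apply_eq: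
  assumes "permutation f"
  shows "orb f (f y) = orb f y"
proof -
  obtain n where n: "n > 0" "(f ^^ n) y = y"
    using permutation_self[OF assms] by blast
  have "(f ^^ i) y = (f ^^ (i + n - 1)) (f y)" for i
  proof -
    have "(f ^^ (i + n - 1)) (f y) = (f ^^ (i + n)) y"
      using n(1) by (metis Suc_diff_1 add_gr_0 funpow_Suc_right o_apply)
    also have "\<dots> = (f ^^ i) y"
      using n(2) by (simp add: funpow_add)
    finally show ?thesis by simp
  qed
  then show ?thesis
    unfolding orb_def by (auto simp del: funpow.simps) (metis funpow_Suc_right o_apply)+
qed

lemma sum_third_pow_le: "(\<Sum>j=1..N. (1/3::real) ^ (j - 1)) \<le> 3/2"
proof -
  have "(\<Sum>j=1..N. (1/3::real) ^ (j - 1)) = 3/2 * (1 - (1/3) ^ N)"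
  proof (induction N)
    case (Suc N)
    have "(1/3::real) ^ Suc N = (1/3) ^ N / 3"
      by simp
    with Suc.IH show ?case
      by (simp del: power_Suc)
  qed simp
  then show ?thesis by simp
qed

lemma sum_nat_third_pow_le: "(\<Sum>j=1..N. real j * (1/3) ^ (j - 1)) \<le> 9/4"
proof -
  have "(\<Sum>j=1..N. real j * (1/3) ^ (j - 1)) = 9/4 - (6 * real N + 9) / 4 * (1/3) ^ N"
  proof (induction N)
    case (Suc N)
    have "(1/3::real) ^ Suc N = (1/3) ^ N / 3"
      by simp
    with Suc.IH show ?case
      by (simp del: power_Suc) (simp add: field_simps)
  qed simp
  moreover have "0 \<le> (6 * real N + 9) / 4 * (1/3::real) ^ N"
    by simp
  ultimately show ?thesis by linarith
qed

definition path_weight :: "'a list \<Rightarrow> real" where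
  "path_weight P = (1/3) ^ (length P div 2 - 1)"

lemma repetition_nth:
  assumes "repetition xs" "i < length xs div 2"
  shows "xs ! i = xs ! (i + length xs div 2)"
  using assms unfolding repetition_def by auto

section \<open>Facial paths of a map\<close>

locale dart_map =
  fixes D :: "'d set" and alpha sigma :: "'d \<Rightarrow> 'd"
  assumes finite_darts: "finite D"
    and alpha_permutes: "alpha permutes D"
    and sigma_permutes: "sigma permutes D"
    and alpha_involution: "\<forall>d\<in>D. alpha d \<noteq> d \<and> alpha (alpha d) = d"
begin

abbreviation "phi \<equiv> face_succ alpha sigma"
abbreviation "edge \<equiv> edge_of alpha"
abbreviation "fpath \<equiv> facial_path D alpha sigma"

lemma phi_permutes: "phi permutes D"
  unfolding face_succ_def by (rule permutes_compose[OF alpha_permutes sigma_permutes])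

lemma inj_phi: "inj phi"
  using permutes_inj[OF phi_permutes] .

lemma edge_eq_iff: "x \<in> D \<Longrightarrow> y \<in> D \<Longrightarrow> edge x = edge y \<longleftrightarrow> y = x \<or> y = alpha x"
  unfolding edge_of_def using alpha_involution by auto

lemma facial_path_nth_in: "fpath P \<Longrightarrow> i < length P \<Longrightarrow> P ! i \<in> D"
  unfolding facial_path_def by auto

lemma facial_path_nth_Suc: "fpath P \<Longrightarrow> Suc i < length P \<Longrightarrow> P ! Suc i = phi (P ! i)"
  unfolding facial_path_def by auto

lemma facial_path_nth_funpow: "fpath P \<Longrightarrow> i < length P \<Longrightarrow> P ! i = (phi ^^ i) (P ! 0)"
  by (induction i) (auto simp: facial_path_nth_Suc)

lemma facial_path_eqI:
  assumes "fpath P" "fpath Q" "length P = length Q" "p < length P" "P ! p = Q ! p"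
  shows "P = Q"
proof -
  have "(phi ^^ p) (P ! 0) = (phi ^^ p) (Q ! 0)"
    using assms facial_path_nth_funpow[of P p] facial_path_nth_funpow[of Q p] by simp
  then have start: "P ! 0 = Q ! 0"
    using inj_fn[OF inj_phi, of p] by (meson injD)
  show ?thesis
  proof (rule nth_equalityI)
    fix i assume i: "i < length P"
    have "P ! i = (phi ^^ i) (P ! 0)"
      using facial_path_nth_funpow[OF assms(1) i] .
    also have "\<dots> = Q ! i"
      using facial_path_nth_funpow[OF assms(2), of i] i assms(3) start by simp
    finally show "P ! i = Q ! i" .
  qed (rule assms(3))
qed

definition path_vertices :: "'d list \<Rightarrow> 'd set list" where
  "path_vertices P = map (tail_v sigma) P @ [head_v alpha sigma (last P)]"

lemma facial_path_vertices_nth: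
  assumes P: "fpath P" and i: "i < length P"
  shows "path_vertices P ! i = tail_v sigma (P ! i)"
    and "path_vertices P ! Suc i = head_v alpha sigma (P ! i)"
proof -
  show "path_vertices P ! i = tail_v sigma (P ! i)"
    using i unfolding path_vertices_def by (simp add: nth_append)
  show "path_vertices P ! Suc i = head_v alpha sigma (P ! i)"
  proof (cases "Suc i < length P")
    case True
    have "permutation sigma"
      using finite_darts sigma_permutes permutation_permutes by blast
    then have "orb sigma (sigma (alpha (P ! i))) = orb sigma (alpha (P ! i))"
      by (rule orb_apply_eq)
    then show ?thesis
      using True facial_path_nth_Suc[OF P True]
      unfolding path_vertices_def tail_v_def head_v_def face_succ_def by (simp add: nth_append)
  next
    case False
    then have "Suc i = length P"
      using i by simp
    moreover have "last P = P ! i"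
      using \<open>Suc i = length P\<close> last_conv_nth[of P] by (metis Zero_not_Suc diff_Suc_1 list.size(3))
    ultimately show ?thesis
      unfolding path_vertices_def by (simp add: nth_append)
  qed
qed

lemma distinct_edges_facial_path:
  assumes P: "fpath P"
  shows "distinct (map edge P)"
proof -
  have dist: "distinct (path_vertices P)"
    using P unfolding facial_path_def path_vertices_def by simp
  have vertex_inj: "i = k" if "i \<le> length P" "k \<le> length P"
    "path_vertices P ! i = path_vertices P ! k" for i k
    using that dist by (simp add: nth_eq_iff_index_eq path_vertices_def)
  have "edge (P ! i) \<noteq> edge (P ! k)" if ik: "i < length P" "k < length P" "i \<noteq> k" for i k
  proof
    assume eq: "edge (P ! i) = edge (P ! k)"
    have iD: "P ! i \<in> D" and kD: "P ! k \<in> D"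
      using ik facial_path_nth_in[OF P] by auto
    consider "P ! k = P ! i" | "P ! k = alpha (P ! i)"
      using edge_eq_iff[OF iD kD] eq by blast
    then show False
    proof cases
      case 1
      then have "path_vertices P ! i = path_vertices P ! k"
        using facial_path_vertices_nth(1)[OF P] ik by simp
      then show False
        using vertex_inj ik by simp
    next
      case 2
      have "path_vertices P ! k = tail_v sigma (P ! k)"
        by (rule facial_path_vertices_nth(1)[OF P ik(2)])
      also have "\<dots> = head_v alpha sigma (P ! i)"
        unfolding 2 tail_v_def head_v_def ..
      also have "\<dots> = path_vertices P ! Suc i"
        by (rule facial_path_vertices_nth(2)[OF P ik(1), symmetric])
      finally have "k = Suc i"
        using vertex_inj ik by simp
      have "path_vertices P ! Suc k = head_v alpha sigma (P ! k)"
        by (rule facial_path_vertices_nth(2)[OF P ik(2)])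
      also have "\<dots> = tail_v sigma (P ! i)"
        unfolding 2 tail_v_def head_v_def using alpha_involution iD by simp
      also have "\<dots> = path_vertices P ! i"
        by (rule facial_path_vertices_nth(1)[OF P ik(1), symmetric])
      finally have "Suc k = i"
        using vertex_inj ik by simp
      with \<open>k = Suc i\<close> show False
        by simp
    qed
  qed
  then show ?thesis
    by (simp add: distinct_conv_nth)
qed

lemma facial_path_edge_inj:
  "fpath P \<Longrightarrow> i < length P \<Longrightarrow> k < length P \<Longrightarrow> edge (P ! i) = edge (P ! k) \<Longrightarrow> i = k"
  using distinct_edges_facial_path[of P] by (metis distinct_conv_nth length_map nth_map)

lemma length_facial_path_le:
  assumes "fpath P"
  shows "length P \<le> card D"
proof -
  have "distinct P"
    using distinct_edges_facial_path[OF assms] by (simp add: distinct_map)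
  then have "length P = card (set P)"
    by (simp add: distinct_card)
  also have "\<dots> \<le> card D"
    using assms by (intro card_mono[OF finite_darts]) (simp add: facial_path_def)
  finally show ?thesis .
qed

lemma finite_facial_paths: "finite {P. fpath P}"
proof (rule finite_subset)
  show "{P. fpath P} \<subseteq> {P. set P \<subseteq> D \<and> length P \<le> card D}"
    using length_facial_path_le by (auto simp: facial_path_def)
qed (rule finite_lists_length_le[OF finite_darts])

definition paths_through :: "nat \<Rightarrow> nat set \<Rightarrow> 'd \<Rightarrow> 'd list set" where
  "paths_through n I y = {P. fpath P \<and> length P = n \<and> (\<exists>p\<in>I. p < n \<and> P ! p = y)}"

lemma finite_paths_through: "finite (paths_through n I y)"
  using finite_facial_paths by (rule finite_subset[rotated]) (auto simp: paths_through_def)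

lemma card_paths_through_le:
  assumes "finite I"
  shows "card (paths_through n I y) \<le> card I"
proof -
  define path_at where "path_at p = (THE P. fpath P \<and> length P = n \<and> P ! p = y)" for p
  have "paths_through n I y \<subseteq> path_at ` I"
  proof
    fix P assume "P \<in> paths_through n I y"
    then obtain p where P: "fpath P" "length P = n" "p \<in> I" "p < n" "P ! p = y"
      by (auto simp: paths_through_def)
    have "path_at p = P"
      unfolding path_at_def
    proof (rule the_equality)
      show "fpath Q \<and> length Q = n \<and> Q ! p = y \<Longrightarrow> Q = P" for Q
        using P facial_path_eqI[of Q P p] by simp
    qed (use P in simp)
    then show "P \<in> path_at ` I"
      using P by auto
  qed
  then have "card (paths_through n I y) \<le> card (path_at ` I)"
    by (rule card_mono[OF finite_imageI[OF assms]])
  also have "\<dots> \<le> card I"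
    using card_image_le[OF assms] .
  finally show ?thesis .
qed

definition nonrep_on :: "'d set set \<Rightarrow> ('d set \<Rightarrow> 'c) \<Rightarrow> bool" where
  "nonrep_on T g \<longleftrightarrow>
     (\<forall>P. fpath P \<and> set (map edge P) \<subseteq> T \<longrightarrow> \<not> repetition (map (\<lambda>d. g (edge d)) P))"

lemma nonrep_on_cong:
  assumes "\<And>z. z \<in> T \<Longrightarrow> g z = h z"
  shows "nonrep_on T g \<longleftrightarrow> nonrep_on T h"
proof -
  have "set (map edge P) \<subseteq> T \<Longrightarrow> map (\<lambda>d. g (edge d)) P = map (\<lambda>d. h (edge d)) P" for P
    using assms by (auto intro: map_cong)
  then show ?thesis
    unfolding nonrep_on_def by metis
qed

lemma nonrep_on_mono: "T' \<subseteq> T \<Longrightarrow> nonrep_on T g \<Longrightarrow> nonrep_on T' g"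
  unfolding nonrep_on_def by blast

lemma nonrep_on_edges_iff: "nonrep_on (edge ` D) g \<longleftrightarrow> facially_nonrepetitive D alpha sigma g"
  unfolding nonrep_on_def facially_nonrepetitive_def facial_path_def by auto

definition even_paths_through :: "'d set set \<Rightarrow> 'd set \<Rightarrow> 'd list set" where
  "even_paths_through S e =
     {P. fpath P \<and> set (map edge P) \<subseteq> S \<and> e \<in> set (map edge P) \<and> even (length P)}"

lemma finite_even_paths_through: "finite (even_paths_through S e)"
  using finite_facial_paths by (rule finite_subset[rotated]) (auto simp: even_paths_through_def)

lemma even_paths_through_length:
  assumes "P \<in> even_paths_through S e"
  shows "length P = 2 * (length P div 2)" "1 \<le> length P div 2"
proof -
  have "length P \<noteq> 0" "even (length P)"
    using assms unfolding even_paths_through_def facial_path_def by auto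
  moreover obtain b where "length P = 2 * b"
    using \<open>even (length P)\<close> by (rule evenE)
  ultimately show "length P = 2 * (length P div 2)" "1 \<le> length P div 2"
    by simp_all
qed

text \<open>Once the colours outside the half of P containing e are fixed, a repetition along P
  determines the colours on that half.\<close>

definition half_start :: "'d set \<Rightarrow> 'd list \<Rightarrow> nat" where
  "half_start e P = (if e \<in> edge ` nth P ` {..<length P div 2} then 0 else length P div 2)"

definition half_through :: "'d set \<Rightarrow> 'd list \<Rightarrow> 'd set set" where
  "half_through e P = edge ` nth P ` {half_start e P .. half_start e P + length P div 2 - 1}"

lemma half_through_segment:
  assumes "P \<in> even_paths_through S e"
  obtains p where "half_start e P \<le> p" "p \<le> half_start e P + length P div 2 - 1"
    "half_start e P + length P div 2 - 1 < length P" "edge (P ! p) = e"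
proof -
  define j where "j = length P div 2"
  have P: "e \<in> edge ` set P"
    using assms unfolding even_paths_through_def by auto
  have len: "length P = 2 * j" "j \<ge> 1"
    using even_paths_through_length[OF assms] unfolding j_def by auto
  show thesis
  proof (cases "e \<in> edge ` nth P ` {..<j}")
    case True
    then obtain p where "p < j" "edge (P ! p) = e"
      by auto
    then show thesis
      using that[of p] len True unfolding half_start_def j_def by auto
  next
    case False
    obtain p where p: "p < 2 * j" "edge (P ! p) = e"
      using P len by (auto simp: in_set_conv_nth)
    with False have "j \<le> p"
      by (metis imageI lessThan_iff not_le_imp_less)
    then show thesis
      using that[of p] len p False unfolding half_start_def j_def by auto
  qed
qed

lemma edge_in_half_through: "P \<in> even_paths_through S e \<Longrightarrow> e \<in> half_through e P"
  by (metis atLeastAtMost_iff half_through_def half_through_segment image_eqI)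

lemma half_through_partner:
  assumes "P \<in> even_paths_through S e" "z \<in> half_through e P"
  obtains w where "w \<in> S - half_through e P"
    "\<And>f :: 'd set \<Rightarrow> 'c. repetition (map (\<lambda>d. f (edge d)) P) \<Longrightarrow> f z = f w"
proof -
  define j where "j = length P div 2"
  define s where "s = half_start e P"
  have P: "fpath P" "set (map edge P) \<subseteq> S"
    using assms(1) unfolding even_paths_through_def by auto
  have len: "length P = 2 * j" "j \<ge> 1"
    using even_paths_through_length[OF assms(1)] unfolding j_def by auto
  have s: "s = 0 \<or> s = j"
    unfolding s_def half_start_def j_def by auto
  obtain q where q: "s \<le> q" "q \<le> s + j - 1" "z = edge (P ! q)"
    using assms(2) unfolding half_through_def s_def j_def by auto
  \<comment> \<open>the position of z in the other half\<close>
  define q' where "q' = (if s = 0 then q + j else q - j)"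
  have q'_lt: "q' < length P" and q'_out: "q' \<notin> {s..s + j - 1}"
    using q s len unfolding q'_def by auto
  have same_colour: "f z = f (edge (P ! q'))" if rep: "repetition (map (\<lambda>d. f (edge d)) P)" for f
  proof -
    have "min q q' < j" "max q q' = min q q' + j"
      using q s len unfolding q'_def by auto
    then show ?thesis
      using repetition_nth[OF rep, of "min q q'"] q(3) len by (simp add: min_def max_def split: if_splits)
  qed
  have "edge (P ! q') \<notin> half_through e P"
  proof
    assume "edge (P ! q') \<in> half_through e P"
    then obtain r where r: "r \<in> {s..s + j - 1}" "edge (P ! q') = edge (P ! r)"
      unfolding half_through_def s_def j_def by auto
    have "r < length P"
      using r(1) s len by auto
    then have "q' = r"
      using r(2) q'_lt facial_path_edge_inj[OF P(1)] by blast
    then show False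
      using r(1) q'_out by simp
  qed
  moreover have "edge (P ! q') \<in> S"
    using P(2) q'_lt by auto
  ultimately show thesis
    using that same_colour by blast
qed

text \<open>If x is dangling in T, a facial path inside T can meet x only as its last dart (first
  disjunct) or only as its first dart (second disjunct).\<close>

definition dangling :: "'d set set \<Rightarrow> 'd \<Rightarrow> bool" where
  "dangling T x \<longleftrightarrow> edge (phi x) \<notin> T \<or> (\<exists>y\<in>D. phi y = x \<and> edge y \<notin> T)"

lemma dangling_position:
  assumes "dangling S x"
  obtains k where "\<And>P p. fpath P \<Longrightarrow> set (map edge P) \<subseteq> S \<Longrightarrow> length P = n \<Longrightarrow> p < n \<Longrightarrow>
    P ! p = x \<Longrightarrow> p = k"
  using assms unfolding dangling_def
proof (elim disjE bexE conjE)
  assume succ: "edge (phi x) \<notin> S"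
  have "p = n - 1" if "fpath P" "set (map edge P) \<subseteq> S" "length P = n" "p < n" "P ! p = x" for P p
  proof (rule ccontr)
    assume "p \<noteq> n - 1"
    then have "Suc p < length P"
      using that by auto
    then show False
      using facial_path_nth_Suc[OF that(1)] that succ nth_mem[of "Suc p" P] by auto
  qed
  then show thesis
    using that by blast
next
  fix y assume y: "y \<in> D" "phi y = x" "edge y \<notin> S"
  have "p = 0" if "fpath P" "set (map edge P) \<subseteq> S" "length P = n" "p < n" "P ! p = x" for P p
  proof (rule ccontr)
    assume "p \<noteq> 0"
    then obtain q where q: "p = Suc q"
      by (cases p) auto
    then have "phi (P ! q) = phi y"
      using facial_path_nth_Suc[OF that(1), of q] that y by simp
    then have "P ! q = y"
      using inj_phi by (simp add: inj_eq)
    moreover have "edge (P ! q) \<in> S"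
      using that q by auto
    ultimately show False
      using y by simp
  qed
  then show thesis
    using that by blast
qed

lemma edge_notin_segment:
  assumes "fpath P" "i < length P" "i \<notin> {a..b}" "b < length P"
  shows "edge (P ! i) \<notin> edge ` nth P ` {a..b}"
proof
  assume "edge (P ! i) \<in> edge ` nth P ` {a..b}"
  then obtain r where "r \<in> {a..b}" "edge (P ! i) = edge (P ! r)"
    by auto
  with assms show False
    using facial_path_edge_inj[OF assms(1), of i r] by auto
qed

lemma segment_dangling_end:
  assumes P: "fpath P" and "a \<le> p" "p \<le> b" "b < length P" "a < b"
  obtains i a' b' where "{a..b} = insert i {a'..b'}" "i \<notin> {a'..b'}" "a' \<le> p" "p \<le> b'"
    "b' - a' = b - a - 1" "b' \<le> b" "dangling (S - edge ` nth P ` {a'..b'}) (P ! i)"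
proof (cases "a < p")
  case True
  have "phi (P ! a) = P ! Suc a"
    using facial_path_nth_Suc[OF P] True assms by simp
  then have "dangling (S - edge ` nth P ` {Suc a..b}) (P ! a)"
    unfolding dangling_def using True assms by auto
  then show thesis
    using that[of a "Suc a" b] True assms by force
next
  case False
  have "phi (P ! (b - 1)) = P ! b" "P ! (b - 1) \<in> D"
    using facial_path_nth_Suc[OF P, of "b - 1"] facial_path_nth_in[OF P, of "b - 1"] assms
    by simp_all
  then have "dangling (S - edge ` nth P ` {a..b - 1}) (P ! b)"
    unfolding dangling_def using assms by force
  then show thesis
    using that[of b a "b - 1"] False assms by force
qed

lemma card_even_paths_of_length_le:
  assumes x: "x \<in> D" and "finite I"
    and positions: "\<And>P p. fpath P \<Longrightarrow> set (map edge P) \<subseteq> S \<Longrightarrow> length P = n \<Longrightarrow> p < n \<Longrightarrow>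
      P ! p = x \<Longrightarrow> p \<in> I"
  shows "card {P \<in> even_paths_through S (edge x). length P = n} \<le> card I + n"
proof -
  have "{P \<in> even_paths_through S (edge x). length P = n} \<subseteq>
      paths_through n I x \<union> paths_through n {..<n} (alpha x)"
  proof
    fix P assume P: "P \<in> {P \<in> even_paths_through S (edge x). length P = n}"
    then have fP: "fpath P" "set (map edge P) \<subseteq> S" "length P = n"
      unfolding even_paths_through_def by auto
    obtain p where p: "p < n" "edge (P ! p) = edge x"
      using P by (auto simp: even_paths_through_def in_set_conv_nth)
    then have "P ! p = x \<or> P ! p = alpha x"
      using edge_eq_iff[OF x facial_path_nth_in[OF fP(1)]] fP(3) by auto
    then show "P \<in> paths_through n I x \<union> paths_through n {..<n} (alpha x)"
      using positions[OF fP] p fP unfolding paths_through_def by auto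
  qed
  then have "card {P \<in> even_paths_through S (edge x). length P = n}
      \<le> card (paths_through n I x \<union> paths_through n {..<n} (alpha x))"
    by (rule card_mono[OF finite_UnI[OF finite_paths_through finite_paths_through]])
  also have "\<dots> \<le> card (paths_through n I x) + card (paths_through n {..<n} (alpha x))"
    by (rule card_Un_le)
  also have "\<dots> \<le> card I + n"
    using card_paths_through_le[OF assms(2)] card_paths_through_le[of "{..<n}"] by (simp add: add_mono)
  finally show ?thesis .
qed

lemma sum_path_weight_even_paths_le:
  assumes "\<And>j. card {P \<in> even_paths_through S e. length P = 2 * j} \<le> c j"
  shows "(\<Sum>P\<in>even_paths_through S e. path_weight P)
    \<le> (\<Sum>j=1..card D. real (c j) * (1/3) ^ (j - 1))"
proof -
  let ?B = "even_paths_through S e"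
  have half_length: "length P div 2 \<in> {1..card D}" if "P \<in> ?B" for P
    using that even_paths_through_length[OF that] length_facial_path_le[of P]
    by (auto simp: even_paths_through_def)
  have "(\<Sum>P\<in>?B. path_weight P) = (\<Sum>j=1..card D. \<Sum>P\<in>{P \<in> ?B. length P div 2 = j}. path_weight P)"
    using half_length by (intro sum.group[symmetric] finite_even_paths_through) auto
  also have "\<dots> = (\<Sum>j=1..card D. real (card {P \<in> ?B. length P = 2 * j}) * (1/3) ^ (j - 1))"
  proof (rule sum.cong[OF refl])
    fix j
    have "{P \<in> ?B. length P div 2 = j} = {P \<in> ?B. length P = 2 * j}"
      by (auto simp: even_paths_through_def elim!: evenE)
    then show "(\<Sum>P\<in>{P \<in> ?B. length P div 2 = j}. path_weight P)
        = real (card {P \<in> ?B. length P = 2 * j}) * (1/3) ^ (j - 1)"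
      by (simp add: path_weight_def)
  qed
  also have "\<dots> \<le> (\<Sum>j=1..card D. real (c j) * (1/3) ^ (j - 1))"
    using assms by (intro sum_mono mult_right_mono) auto
  finally show ?thesis .
qed

lemma sum_path_weight_even_paths_le_9:
  assumes "x \<in> D"
  shows "(\<Sum>P\<in>even_paths_through S (edge x). path_weight P) \<le> 9"
proof -
  have "card {P \<in> even_paths_through S (edge x). length P = 2 * j} \<le> 4 * j" for j
    using card_even_paths_of_length_le[OF assms, of "{..<2 * j}" S "2 * j"] by simp
  then have "(\<Sum>P\<in>even_paths_through S (edge x). path_weight P)
      \<le> (\<Sum>j=1..card D. real (4 * j) * (1/3) ^ (j - 1))"
    by (rule sum_path_weight_even_paths_le)
  also have "\<dots> = 4 * (\<Sum>j=1..card D. real j * (1/3) ^ (j - 1))"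
    by (simp add: sum_distrib_left mult.assoc)
  also have "\<dots> \<le> 9"
    using sum_nat_third_pow_le[of "card D"] by simp
  finally show ?thesis .
qed

lemma sum_path_weight_even_paths_le_6:
  assumes "x \<in> D" "dangling S x"
  shows "(\<Sum>P\<in>even_paths_through S (edge x). path_weight P) \<le> 6"
proof -
  have "card {P \<in> even_paths_through S (edge x). length P = 2 * j} \<le> 2 * j + 1" for j
  proof -
    obtain k where "\<And>P p. fpath P \<Longrightarrow> set (map edge P) \<subseteq> S \<Longrightarrow> length P = 2 * j \<Longrightarrow>
        p < 2 * j \<Longrightarrow> P ! p = x \<Longrightarrow> p = k"
      using dangling_position[OF assms(2)] by blast
    then show ?thesis
      using card_even_paths_of_length_le[OF assms(1), of "{k}" S "2 * j"] by simp
  qed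
  then have "(\<Sum>P\<in>even_paths_through S (edge x). path_weight P)
      \<le> (\<Sum>j=1..card D. real (2 * j + 1) * (1/3) ^ (j - 1))"
    by (rule sum_path_weight_even_paths_le)
  also have "\<dots> = 2 * (\<Sum>j=1..card D. real j * (1/3) ^ (j - 1)) + (\<Sum>j=1..card D. (1/3::real) ^ (j - 1))"
    by (simp add: sum.distrib sum_distrib_left algebra_simps)
  also have "\<dots> \<le> 6"
    using sum_nat_third_pow_le[of "card D"] sum_third_pow_le[of "card D"] by simp
  finally show ?thesis .
qed

end

section \<open>Counting non-repetitive list colourings\<close>

locale list_assignment = dart_map D alpha sigma
  for D :: "'d set" and alpha sigma :: "'d \<Rightarrow> 'd" +
  fixes L :: "'d set \<Rightarrow> 'c set"
  assumes lists_card_10: "\<forall>d\<in>D. finite (L (edge d)) \<and> card (L (edge d)) = 10"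
begin

definition edges :: "'d set set" where
  "edges = edge ` D"

definition good_colourings :: "'d set set \<Rightarrow> ('d set \<Rightarrow> 'c) set" where
  "good_colourings T = {f \<in> PiE T L. nonrep_on T f}"

definition ngood :: "'d set set \<Rightarrow> nat" where
  "ngood T = card (good_colourings T)"

lemma list_of_edge: "e \<in> edges \<Longrightarrow> finite (L e) \<and> card (L e) = 10"
  unfolding edges_def using lists_card_10 by auto

lemma finite_PiE_lists: "T \<subseteq> edges \<Longrightarrow> finite (PiE T L)"
  using finite_subset[of T edges] finite_darts list_of_edge
  by (intro finite_PiE) (auto simp: edges_def)

lemma finite_good_colourings: "T \<subseteq> edges \<Longrightarrow> finite (good_colourings T)"
  unfolding good_colourings_def using finite_PiE_lists by simp

lemma bij_betw_extensions_of_good: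
  assumes e: "e \<in> S"
  shows "bij_betw (\<lambda>f. (f(e := undefined), f e)) {f \<in> PiE S L. nonrep_on (S - {e}) f}
    (good_colourings (S - {e}) \<times> L e)"
proof (rule bij_betw_byWitness[where f' = "\<lambda>(g, c). g(e := c)"])
  let ?A = "{f \<in> PiE S L. nonrep_on (S - {e}) f}"
  have S_eq: "insert e (S - {e}) = S"
    using e by blast
  have nonrep_upd: "nonrep_on (S - {e}) (f(e := c)) \<longleftrightarrow> nonrep_on (S - {e}) f" for f c
    by (rule nonrep_on_cong) simp
  show "\<forall>f\<in>?A. (\<lambda>(g, c). g(e := c)) (f(e := undefined), f e) = f"
    by simp
  show "\<forall>gc\<in>good_colourings (S - {e}) \<times> L e.
      (\<lambda>f. (f(e := undefined), f e)) ((\<lambda>(g, c). g(e := c)) gc) = gc"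
  proof
    fix gc assume "gc \<in> good_colourings (S - {e}) \<times> L e"
    then obtain g c where gc: "gc = (g, c)" "g \<in> PiE (S - {e}) L"
      unfolding good_colourings_def by blast
    have "g e = undefined"
      using PiE_arb[OF gc(2)] by simp
    then show "(\<lambda>f. (f(e := undefined), f e)) ((\<lambda>(g, c). g(e := c)) gc) = gc"
      unfolding gc(1) by (simp add: fun_upd_idem)
  qed
  show "(\<lambda>f. (f(e := undefined), f e)) ` ?A \<subseteq> good_colourings (S - {e}) \<times> L e"
  proof (rule image_subsetI)
    fix f assume "f \<in> ?A"
    then have f: "f \<in> PiE (insert e (S - {e})) L" "nonrep_on (S - {e}) f"
      unfolding S_eq by simp_all
    show "(f(e := undefined), f e) \<in> good_colourings (S - {e}) \<times> L e"
      using fun_upd_in_PiE[OF _ f(1)] PiE_mem[OF f(1)] f(2)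
      unfolding good_colourings_def by (simp add: nonrep_upd)
  qed
  show "(\<lambda>(g, c). g(e := c)) ` (good_colourings (S - {e}) \<times> L e) \<subseteq> ?A"
  proof
    fix f assume "f \<in> (\<lambda>(g, c). g(e := c)) ` (good_colourings (S - {e}) \<times> L e)"
    then obtain g c where "g \<in> good_colourings (S - {e})" "c \<in> L e" "f = g(e := c)"
      by auto
    then show "f \<in> ?A"
      using PiE_fun_upd[of c L e g "S - {e}"]
      unfolding good_colourings_def S_eq by (simp add: nonrep_upd)
  qed
qed

lemma card_extensions_of_good:
  assumes "S \<subseteq> edges" "e \<in> S"
  shows "card {f \<in> PiE S L. nonrep_on (S - {e}) f} = 10 * ngood (S - {e})"
proof -
  have "card {f \<in> PiE S L. nonrep_on (S - {e}) f} = card (good_colourings (S - {e})) * card (L e)"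
    using bij_betw_same_card[OF bij_betw_extensions_of_good[OF assms(2)]]
    by (simp add: card_cartesian_product)
  moreover have "card (L e) = 10"
    using list_of_edge assms by blast
  ultimately show ?thesis
    unfolding ngood_def by simp
qed

lemma restrict_off_half_good:
  assumes P: "P \<in> even_paths_through S e" and f: "f \<in> PiE S L" "nonrep_on (S - {e}) f"
  shows "restrict f (S - half_through e P) \<in> good_colourings (S - half_through e P)"
proof -
  let ?H = "half_through e P"
  have "restrict f (S - ?H) \<in> PiE (S - ?H) L"
    using PiE_mem[OF f(1)] by (simp add: restrict_PiE_iff)
  moreover have "nonrep_on (S - ?H) f"
    using edge_in_half_through[OF P] by (intro nonrep_on_mono[OF _ f(2)]) blast
  then have "nonrep_on (S - ?H) (restrict f (S - ?H))"
    using nonrep_on_cong[of "S - ?H" "restrict f (S - ?H)" f] by simp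
  ultimately show ?thesis
    unfolding good_colourings_def by simp
qed

lemma inj_on_restrict_off_half:
  assumes P: "P \<in> even_paths_through S e"
  shows "inj_on (\<lambda>f. restrict f (S - half_through e P))
    {f \<in> PiE S L. repetition (map (\<lambda>d. f (edge d)) P)}"
proof (rule inj_onI)
  let ?H = "half_through e P"
  fix f g
  assume f: "f \<in> {f \<in> PiE S L. repetition (map (\<lambda>d. f (edge d)) P)}"
    and g: "g \<in> {f \<in> PiE S L. repetition (map (\<lambda>d. f (edge d)) P)}"
    and eq: "restrict f (S - ?H) = restrict g (S - ?H)"
  have PiE: "f \<in> PiE S L" "g \<in> PiE S L"
    and rep: "repetition (map (\<lambda>d. f (edge d)) P)" "repetition (map (\<lambda>d. g (edge d)) P)"
    using f g by simp_all
  have outside: "f z = g z" if "z \<in> S - ?H" for z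
    using fun_cong[OF eq, of z] that by simp
  show "f = g"
  proof
    fix z
    consider "z \<notin> S" | "z \<in> S - ?H" | "z \<in> ?H"
      by blast
    then show "f z = g z"
    proof cases
      case 1
      then show ?thesis
        using PiE_arb[OF PiE(1)] PiE_arb[OF PiE(2)] by simp
    next
      case 2
      then show ?thesis
        by (rule outside)
    next
      case 3
      then obtain w where w: "w \<in> S - ?H"
        and partner: "\<And>h :: 'd set \<Rightarrow> 'c. repetition (map (\<lambda>d. h (edge d)) P) \<Longrightarrow> h z = h w"
        using half_through_partner[OF P] by blast
      show ?thesis
        using partner[OF rep(1)] partner[OF rep(2)] outside[OF w] by simp
    qed
  qed
qed

lemma card_repeating_extensions_le:
  assumes S: "S \<subseteq> edges" and P: "P \<in> even_paths_through S e"
  shows "card {f \<in> PiE S L. nonrep_on (S - {e}) f \<and> repetition (map (\<lambda>d. f (edge d)) P)}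
    \<le> ngood (S - half_through e P)"
  unfolding ngood_def
proof (rule card_inj_on_le)
  show "inj_on (\<lambda>f. restrict f (S - half_through e P))
      {f \<in> PiE S L. nonrep_on (S - {e}) f \<and> repetition (map (\<lambda>d. f (edge d)) P)}"
    by (rule inj_on_subset[OF inj_on_restrict_off_half[OF P]]) (simp add: Collect_mono)
  show "(\<lambda>f. restrict f (S - half_through e P)) `
      {f \<in> PiE S L. nonrep_on (S - {e}) f \<and> repetition (map (\<lambda>d. f (edge d)) P)}
      \<subseteq> good_colourings (S - half_through e P)"
    using restrict_off_half_good[OF P] by (intro image_subsetI) simp
  show "finite (good_colourings (S - half_through e P))"
    using S by (intro finite_good_colourings) blast
qed

text \<open>Every colouring that is good on S - {e} is either good on S or repeats along an even
  facial path through e.\<close>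

lemma ngood_extension_count:
  assumes S: "S \<subseteq> edges" and e: "e \<in> S"
  shows "10 * ngood (S - {e}) \<le> ngood S + (\<Sum>P\<in>even_paths_through S e. ngood (S - half_through e P))"
proof -
  let ?A = "{f \<in> PiE S L. nonrep_on (S - {e}) f}"
  define R where "R P = {f \<in> PiE S L. nonrep_on (S - {e}) f \<and> repetition (map (\<lambda>d. f (edge d)) P)}"
    for P
  have cover: "?A \<subseteq> good_colourings S \<union> (\<Union>P\<in>even_paths_through S e. R P)"
  proof
    fix f assume f: "f \<in> ?A"
    show "f \<in> good_colourings S \<union> (\<Union>P\<in>even_paths_through S e. R P)"
    proof (cases "nonrep_on S f")
      case True
      then show ?thesis
        using f unfolding good_colourings_def by simp
    next
      case False
      then obtain Q where Q: "fpath Q" "set (map edge Q) \<subseteq> S" "repetition (map (\<lambda>d. f (edge d)) Q)"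
        unfolding nonrep_on_def by blast
      have "e \<in> set (map edge Q)"
        using f Q unfolding nonrep_on_def by blast
      moreover have "even (length Q)"
        using Q(3) unfolding repetition_def by auto
      ultimately have "Q \<in> even_paths_through S e"
        using Q unfolding even_paths_through_def by simp
      then show ?thesis
        using f Q(3) unfolding R_def by blast
    qed
  qed
  have finite_R: "finite (R P)" for P
    using finite_PiE_lists[OF S] unfolding R_def by simp
  have "10 * ngood (S - {e}) = card ?A"
    using card_extensions_of_good[OF S e] by simp
  also have "\<dots> \<le> card (good_colourings S \<union> (\<Union>P\<in>even_paths_through S e. R P))"
    using finite_good_colourings[OF S] finite_R finite_even_paths_through
    by (intro card_mono[OF _ cover]) simp
  also have "\<dots> \<le> card (good_colourings S) + card (\<Union>P\<in>even_paths_through S e. R P)"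
    by (rule card_Un_le)
  also have "\<dots> \<le> ngood S + (\<Sum>P\<in>even_paths_through S e. card (R P))"
    using card_UN_le[OF finite_even_paths_through, of R] unfolding ngood_def by simp
  also have "\<dots> \<le> ngood S + (\<Sum>P\<in>even_paths_through S e. ngood (S - half_through e P))"
    using card_repeating_extensions_le[OF S] unfolding R_def by (simp add: sum_mono)
  finally show ?thesis .
qed

lemma ngood_remove_segment:
  assumes dangling_bound: "\<And>T y. T \<subseteq> S - {edge (P ! p)} \<Longrightarrow> y \<in> D \<Longrightarrow> edge y \<in> T \<Longrightarrow> dangling T y \<Longrightarrow>
      3 * ngood (T - {edge y}) \<le> ngood T"
    and P: "fpath P" "set (map edge P) \<subseteq> S"
  shows "a \<le> p \<Longrightarrow> p \<le> b \<Longrightarrow> b < length P \<Longrightarrow>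
    3 ^ (b - a) * ngood (S - edge ` nth P ` {a..b}) \<le> ngood (S - {edge (P ! p)})"
proof (induction "b - a" arbitrary: a b)
  case 0
  then have "a = p" "b = p"
    by simp_all
  then show ?case
    by simp
next
  case (Suc k)
  obtain i a' b' where seg: "{a..b} = insert i {a'..b'}" "i \<notin> {a'..b'}" "a' \<le> p" "p \<le> b'"
      "b' - a' = k" "b' \<le> b" and dangle: "dangling (S - edge ` nth P ` {a'..b'}) (P ! i)"
    using segment_dangling_end[OF P(1) Suc.prems] Suc.hyps(2) by (metis diff_Suc_1 zero_less_Suc zero_less_diff)
  let ?T = "S - edge ` nth P ` {a'..b'}"
  have "i \<in> {a..b}"
    using seg(1) by blast
  then have i: "i < length P"
    using Suc.prems by auto
  have "edge (P ! i) \<in> ?T"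
    using edge_notin_segment[OF P(1) i seg(2)] seg(6) Suc.prems P(2) i by auto
  moreover have "?T \<subseteq> S - {edge (P ! p)}" "?T - {edge (P ! i)} = S - edge ` nth P ` {a..b}"
    using seg by auto
  ultimately have "3 * ngood (S - edge ` nth P ` {a..b}) \<le> ngood ?T"
    using dangling_bound[OF _ facial_path_nth_in[OF P(1) i] _ dangle] by simp
  then have "3 ^ (b - a) * ngood (S - edge ` nth P ` {a..b}) \<le> 3 ^ k * ngood ?T"
    using Suc.hyps(2)[symmetric] by simp
  also have "\<dots> \<le> ngood (S - {edge (P ! p)})"
    using Suc.hyps(1)[of b' a'] seg Suc.prems by simp
  finally show ?case .
qed

lemma ngood_key_inequality:
  assumes S: "S \<subseteq> edges" and x: "x \<in> D" "edge x \<in> S"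
    and dangling_bound: "\<And>T y. T \<subseteq> S - {edge x} \<Longrightarrow> y \<in> D \<Longrightarrow> edge y \<in> T \<Longrightarrow> dangling T y \<Longrightarrow>
      3 * ngood (T - {edge y}) \<le> ngood T"
  shows "10 * real (ngood (S - {edge x})) \<le> real (ngood S) + real (ngood (S - {edge x})) *
    (\<Sum>P\<in>even_paths_through S (edge x). path_weight P)"
proof -
  let ?e = "edge x"
  have half: "real (ngood (S - half_through ?e P)) \<le> real (ngood (S - {?e})) * path_weight P"
    if P: "P \<in> even_paths_through S ?e" for P
  proof -
    define s where "s = half_start ?e P"
    define b where "b = s + length P div 2 - 1"
    obtain p where p: "s \<le> p" "p \<le> b" "b < length P" "edge (P ! p) = ?e"
      using half_through_segment[OF P] unfolding s_def b_def by blast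
    have fP: "fpath P" "set (map edge P) \<subseteq> S"
      using P unfolding even_paths_through_def by auto
    have "3 ^ (b - s) * ngood (S - edge ` nth P ` {s..b}) \<le> ngood (S - {edge (P ! p)})"
      by (rule ngood_remove_segment[OF _ fP p(1-3)]) (use dangling_bound p(4) in simp)
    moreover have "b - s = length P div 2 - 1" "edge ` nth P ` {s..b} = half_through ?e P"
      unfolding b_def s_def half_through_def by simp_all
    ultimately have "3 ^ (length P div 2 - 1) * ngood (S - half_through ?e P) \<le> ngood (S - {?e})"
      using p(4) by simp
    then have "real (ngood (S - half_through ?e P)) * 3 ^ (length P div 2 - 1) \<le> real (ngood (S - {?e}))"
      using of_nat_mono by (fastforce simp: mult.commute)
    then show ?thesis
      unfolding path_weight_def by (simp add: pos_le_divide_eq power_one_over flip: divide_inverse)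
  qed
  have "real (10 * ngood (S - {?e}))
      \<le> real (ngood S + (\<Sum>P\<in>even_paths_through S ?e. ngood (S - half_through ?e P)))"
    using ngood_extension_count[OF S x(2)] by (rule of_nat_mono)
  then have "10 * real (ngood (S - {?e}))
      \<le> real (ngood S) + (\<Sum>P\<in>even_paths_through S ?e. real (ngood (S - half_through ?e P)))"
    by simp
  also have "\<dots> \<le> real (ngood S)
      + (\<Sum>P\<in>even_paths_through S ?e. real (ngood (S - {?e})) * path_weight P)"
    using half by (intro add_left_mono sum_mono)
  finally show ?thesis
    by (simp add: sum_distrib_left)
qed

lemma ngood_remove_dangling:
  "S \<subseteq> edges \<Longrightarrow> x \<in> D \<Longrightarrow> edge x \<in> S \<Longrightarrow> dangling S x \<Longrightarrow> 3 * ngood (S - {edge x}) \<le> ngood S"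
proof (induction "card S" arbitrary: S x rule: less_induct)
  case less
  have dangling_bound: "3 * ngood (T - {edge y}) \<le> ngood T"
    if "T \<subseteq> S - {edge x}" "y \<in> D" "edge y \<in> T" "dangling T y" for T y
  proof -
    have "finite S"
      using less.prems(1) finite_darts finite_subset unfolding edges_def by blast
    moreover have "T \<subset> S"
      using that(1) less.prems(3) by blast
    ultimately have "card T < card S"
      by (rule psubset_card_mono)
    moreover have "T \<subseteq> edges"
      using that(1) less.prems(1) by blast
    ultimately show ?thesis
      using less.hyps that(2-4) by blast
  qed
  have "real (ngood (S - {edge x})) *
      (\<Sum>P\<in>even_paths_through S (edge x). path_weight P)
      \<le> real (ngood (S - {edge x})) * 6"
    using sum_path_weight_even_paths_le_6[OF less.prems(2,4)] by (intro mult_left_mono) auto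
  then show ?case
    using ngood_key_inequality[OF less.prems(1-3) dangling_bound] by linarith
qed

lemma ngood_remove_edge:
  assumes S: "S \<subseteq> edges" and x: "x \<in> D" "edge x \<in> S"
  shows "ngood (S - {edge x}) \<le> ngood S"
proof -
  have dangling_bound: "3 * ngood (T - {edge y}) \<le> ngood T"
    if "T \<subseteq> S - {edge x}" "y \<in> D" "edge y \<in> T" "dangling T y" for T y
    using ngood_remove_dangling[OF _ that(2-4)] that(1) S by blast
  have "real (ngood (S - {edge x})) *
      (\<Sum>P\<in>even_paths_through S (edge x). path_weight P)
      \<le> real (ngood (S - {edge x})) * 9"
    using sum_path_weight_even_paths_le_9[OF x(1)] by (intro mult_left_mono) auto
  then show ?thesis
    using ngood_key_inequality[OF S x dangling_bound] by linarith
qed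

lemma ngood_pos: "S \<subseteq> edges \<Longrightarrow> 0 < ngood S"
proof (induction S rule: infinite_finite_induct)
  case (infinite S)
  then show ?case
    using finite_subset finite_darts unfolding edges_def by blast
next
  case empty
  have "good_colourings {} = {\<lambda>_. undefined}"
    unfolding good_colourings_def nonrep_on_def facial_path_def by auto
  then show ?case
    unfolding ngood_def by simp
next
  case (insert e F)
  then obtain x where x: "x \<in> D" "e = edge x"
    unfolding edges_def by auto
  have "insert e F - {edge x} = F"
    using insert.hyps(2) x by auto
  then show ?case
    using ngood_remove_edge[of "insert e F" x] insert x by auto
qed

lemma exists_good_colouring: "\<exists>f\<in>PiE edges L. nonrep_on edges f"
  using ngood_pos[of edges] unfolding ngood_def good_colourings_def by (auto simp: card_gt_0_iff)

end

lemma obtain_sublists_with_card: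
  assumes "\<forall>d\<in>D. infinite (L (h d)) \<or> k \<le> card (L (h d))"
  obtains L' where "\<forall>d\<in>D. L' (h d) \<subseteq> L (h d) \<and> finite (L' (h d)) \<and> card (L' (h d)) = k"
proof -
  have sublist: "\<exists>B. B \<subseteq> L (h d) \<and> finite B \<and> card B = k" if "d \<in> D" for d
  proof (cases "finite (L (h d))")
    case True
    then have "k \<le> card (L (h d))"
      using assms that by blast
    then obtain B where "B \<subseteq> L (h d)" "card B = k" "finite B"
      by (rule obtain_subset_with_card_n)
    then show ?thesis
      by blast
  next
    case False
    then show ?thesis
      using infinite_arbitrarily_large by blast
  qed
  show thesis
  proof (rule that[of "\<lambda>e. SOME B. B \<subseteq> L e \<and> finite B \<and> card B = k"], intro ballI)
    fix d assume "d \<in> D"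
    then show "(SOME B. B \<subseteq> L (h d) \<and> finite B \<and> card B = k) \<subseteq> L (h d) \<and>
        finite (SOME B. B \<subseteq> L (h d) \<and> finite B \<and> card B = k) \<and>
        card (SOME B. B \<subseteq> L (h d) \<and> finite B \<and> card B = k) = k"
      by (rule someI_ex[OF sublist])
  qed
qed

theorem corollary2:
  fixes D :: "'d set" and alpha sigma :: "'d \<Rightarrow> 'd" and L :: "'d set \<Rightarrow> 'c set"
  assumes "plane_graph D alpha sigma"
    and "\<forall>d\<in>D. infinite (L (edge_of alpha d)) \<or> 10 \<le> card (L (edge_of alpha d))"
  shows "\<exists>c :: 'd set \<Rightarrow> 'c.
           (\<forall>d\<in>D. c (edge_of alpha d) \<in> L (edge_of alpha d)) \<and>
           facially_nonrepetitive D alpha sigma c"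
proof -
  obtain L' where L': "\<forall>d\<in>D. L' (edge_of alpha d) \<subseteq> L (edge_of alpha d) \<and>
      finite (L' (edge_of alpha d)) \<and> card (L' (edge_of alpha d)) = 10"
    using obtain_sublists_with_card[where h = "edge_of alpha", OF assms(2)] .
  interpret list_assignment D alpha sigma L'
    using assms(1) L' unfolding plane_graph_def plane_map_def by unfold_locales auto
  obtain f where "f \<in> PiE edges L'" "nonrep_on edges f"
    using exists_good_colouring by blast
  then show ?thesis
    using L' nonrep_on_edges_iff unfolding edges_def by (metis PiE_mem image_eqI subsetD)
qed

end
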